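(* Let $H$ be a Hilbert space and $T$ a densely defined closed operator on $H$. If $T$ is a quasinormal EP operator, then $(T^{*}T)^{\dagger}T\subset T(T^{*}T)^{\dagger}$.
   Context: A densely defined closed operator $T$ on $H$ is EP if $R(T)$ is closed and $R(T)=R(T^{*})$; it is quasinormal if $T(T^{*}T)=(T^{*}T)T$. For a closed operator $A$ with closed range, $C(A)=D(A)\cap N(A)^{\perp}$ and the Moore–Penrose inverse $A^{\dagger}$ is defined on $R(A)\oplus^{\perp}R(A)^{\perp}$ by $A^{\dagger}y=(A|_{C(A)})^{-1}y$ for $y\in R(A)$ and $A^{\dagger}y=0$ for $y\in R(A)^{\perp}$. Products are on natural domains; $A\subset B$ means $D(A)\subset D(B)$ and $B|_{D(A)}=A$. *)

theory Defs
  imports "HOL-Analysis.Analysis"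
begin

text \<open>The library has no complex inner product spaces, so we introduce the class of
complex Hilbert spaces: a real Banach space carrying a compatible complex scalar
multiplication and a sesquilinear inner product (linear in the second argument)
whose induced norm is the given norm.\<close>

class complex_hilbert = banach +
  fixes scaleC :: "complex \<Rightarrow> 'a \<Rightarrow> 'a"
    and cinner :: "'a \<Rightarrow> 'a \<Rightarrow> complex"
  assumes scaleC_add_right: "scaleC a (x + y) = scaleC a x + scaleC a y"
    and scaleC_add_left: "scaleC (a + b) x = scaleC a x + scaleC b x"
    and scaleC_scaleC: "scaleC a (scaleC b x) = scaleC (a * b) x"
    and scaleC_one: "scaleC 1 x = x"
    and scaleR_scaleC: "scaleR r x = scaleC (complex_of_real r) x"
    and cinner_cnj: "cinner x y = cnj (cinner y x)"
    and cinner_add_left: "cinner (x + y) z = cinner x z + cinner y z"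
    and cinner_scaleC_left: "cinner (scaleC a x) y = cnj a * cinner x y"
    and cinner_self_norm: "cinner x x = complex_of_real ((norm x)\<^sup>2)"

text \<open>An operator on H is a pair (domain, action); values outside the domain are irrelevant.\<close>

type_synonym 'a lop = "'a set \<times> ('a \<Rightarrow> 'a)"

definition dom :: "'a lop \<Rightarrow> 'a set" where "dom T = fst T"
definition app :: "'a lop \<Rightarrow> 'a \<Rightarrow> 'a" where "app T = snd T"

definition csubspace :: "'a::complex_hilbert set \<Rightarrow> bool" where
  "csubspace S \<longleftrightarrow> 0 \<in> S \<and> (\<forall>x\<in>S. \<forall>y\<in>S. x + y \<in> S) \<and> (\<forall>a. \<forall>x\<in>S. scaleC a x \<in> S)"

definition linear_op :: "'a::complex_hilbert lop \<Rightarrow> bool" where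
  "linear_op T \<longleftrightarrow> csubspace (dom T) \<and>
     (\<forall>x\<in>dom T. \<forall>y\<in>dom T. app T (x + y) = app T x + app T y) \<and>
     (\<forall>a. \<forall>x\<in>dom T. app T (scaleC a x) = scaleC a (app T x))"

definition densely_defined :: "'a::complex_hilbert lop \<Rightarrow> bool" where
  "densely_defined T \<longleftrightarrow> closure (dom T) = UNIV"

definition graph :: "'a lop \<Rightarrow> ('a \<times> 'a) set" where
  "graph T = {(x, app T x) | x. x \<in> dom T}"

definition closed_op :: "'a::complex_hilbert lop \<Rightarrow> bool" where
  "closed_op T \<longleftrightarrow> linear_op T \<and> closed (graph T)"

definition ran :: "'a lop \<Rightarrow> 'a set" where "ran T = app T ` dom T"

definition ker :: "'a::complex_hilbert lop \<Rightarrow> 'a set" where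
  "ker T = {x \<in> dom T. app T x = 0}"

definition orth :: "'a::complex_hilbert set \<Rightarrow> 'a set" where
  "orth S = {y. \<forall>x\<in>S. cinner x y = 0}"

definition adj :: "'a::complex_hilbert lop \<Rightarrow> 'a lop" where
  "adj T = ({y. \<exists>z. \<forall>x\<in>dom T. cinner (app T x) y = cinner x z},
            \<lambda>y. THE z. \<forall>x\<in>dom T. cinner (app T x) y = cinner x z)"

definition comp_op :: "'a lop \<Rightarrow> 'a lop \<Rightarrow> 'a lop" where
  "comp_op A B = ({x \<in> dom B. app B x \<in> dom A}, \<lambda>x. app A (app B x))"

definition op_eq :: "'a lop \<Rightarrow> 'a lop \<Rightarrow> bool" where
  "op_eq A B \<longleftrightarrow> dom A = dom B \<and> (\<forall>x\<in>dom A. app A x = app B x)"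

definition op_le :: "'a lop \<Rightarrow> 'a lop \<Rightarrow> bool" where
  "op_le A B \<longleftrightarrow> dom A \<subseteq> dom B \<and> (\<forall>x\<in>dom A. app B x = app A x)"

definition quasinormal :: "'a::complex_hilbert lop \<Rightarrow> bool" where
  "quasinormal T \<longleftrightarrow> op_eq (comp_op T (comp_op (adj T) T)) (comp_op (comp_op (adj T) T) T)"

definition EP :: "'a::complex_hilbert lop \<Rightarrow> bool" where
  "EP T \<longleftrightarrow> closed (ran T) \<and> ran T = ran (adj T)"

definition carrier_op :: "'a::complex_hilbert lop \<Rightarrow> 'a set" where
  "carrier_op A = dom A \<inter> orth (ker A)"

text \<open>Moore--Penrose inverse: defined on R(A) \<oplus> R(A)^\<perp>; for w = y + z with y \<in> R(A),
z \<in> R(A)^\<perp> it returns the unique x \<in> C(A) with A x = y (so it is 0 on R(A)^\<perp>).\<close>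
definition mp_inv :: "'a::complex_hilbert lop \<Rightarrow> 'a lop" where
  "mp_inv A = ({y + z | y z. y \<in> ran A \<and> z \<in> orth (ran A)},
               \<lambda>w. THE x. x \<in> carrier_op A \<and> w - app A x \<in> orth (ran A))"

end

theory Submission
  imports Defs
begin

text \<open>Write A = T* T. For a closed densely defined EP operator, N(T) = R(T*)\<perp> = R(T)\<perp>,
and A has the same range and kernel as T, so R(A) is closed and A\<dagger> is everywhere defined.
Given x \<in> D(T), put w = A\<dagger> x. Then x - A w \<perp> R(T), so x - A w \<in> N(T) and T (A w) = T x;
quasinormality (TA = AT) turns this into A (T w) = T x. Since T w \<in> R(T) = N(A)\<perp>, the vector
T w is exactly the minimal solution defining A\<dagger> (T x), i.e. T A\<dagger> x = A\<dagger> T x.\<close>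

lemma cinner_add_right: "cinner (x::'a::complex_hilbert) (y + z) = cinner x y + cinner x z"
  by (metis cinner_add_left cinner_cnj complex_cnj_add)

lemma cinner_scaleC_right: "cinner (x::'a::complex_hilbert) (scaleC a y) = a * cinner x y"
  by (metis cinner_cnj cinner_scaleC_left complex_cnj_cnj complex_cnj_mult)

lemma cinner_zero_left [simp]: "cinner (0::'a::complex_hilbert) y = 0"
  using cinner_add_left[of 0 0 y] by simp

lemma cinner_zero_right [simp]: "cinner (x::'a::complex_hilbert) 0 = 0"
  by (simp add: cinner_cnj[of x 0])

lemma scaleC_zero_left [simp]: "scaleC 0 (x::'a::complex_hilbert) = 0"
  using scaleR_scaleC[of 0 x] by simp

lemma scaleC_zero_right [simp]: "scaleC a (0::'a::complex_hilbert) = 0"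
  using scaleC_add_right[of a "0::'a" 0] by simp

lemma scaleC_minus_one: "scaleC (-1) (x::'a::complex_hilbert) = - x"
  using scaleR_scaleC[of "-1" x] by simp

lemma cinner_minus_left: "cinner (- x::'a::complex_hilbert) y = - cinner x y"
  using cinner_add_left[of x "-x" y] by (simp add: eq_neg_iff_add_eq_0 add.commute)

lemma cinner_minus_right: "cinner (x::'a::complex_hilbert) (- y) = - cinner x y"
  using cinner_add_right[of x y "-y"] by (simp add: eq_neg_iff_add_eq_0 add.commute)

lemma cinner_diff_right: "cinner (x::'a::complex_hilbert) (y - z) = cinner x y - cinner x z"
  using cinner_add_right[of x y "-z"] by (simp add: cinner_minus_right)

lemma cinner_self_eq_zero: "cinner (x::'a::complex_hilbert) x = 0 \<longleftrightarrow> x = 0"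
  by (simp add: cinner_self_norm)

lemma norm_add_square:
  "(norm (x + y::'a::complex_hilbert))\<^sup>2 = (norm x)\<^sup>2 + (norm y)\<^sup>2 + 2 * Re (cinner x y)"
proof -
  have "complex_of_real ((norm (x + y))\<^sup>2) = cinner (x + y) (x + y)"
    by (simp add: cinner_self_norm)
  also have "\<dots> = cinner x x + cinner y y + (cinner x y + cnj (cinner x y))"
    by (simp add: cinner_add_left cinner_add_right cinner_cnj[of y x])
  finally have "(norm (x + y))\<^sup>2 = Re (cinner x x + cinner y y + (cinner x y + cnj (cinner x y)))"
    by (metis Re_complex_of_real)
  then show ?thesis by (simp add: cinner_self_norm)
qed

lemma norm_diff_square:
  "(norm (x - y::'a::complex_hilbert))\<^sup>2 = (norm x)\<^sup>2 + (norm y)\<^sup>2 - 2 * Re (cinner x y)"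
  using norm_add_square[of x "-y"] by (simp add: cinner_minus_right)

lemma parallelogram_law:
  "(norm (x + y::'a::complex_hilbert))\<^sup>2 + (norm (x - y))\<^sup>2 = 2 * (norm x)\<^sup>2 + 2 * (norm y)\<^sup>2"
  using norm_add_square[of x y] norm_diff_square[of x y] by simp

lemma cinner_polarization: "cinner (x::'a::complex_hilbert) y =
   complex_of_real (((norm (x + y))\<^sup>2 - (norm (x - y))\<^sup>2) / 4)
   + \<i> * complex_of_real (((norm (scaleC \<i> x + y))\<^sup>2 - (norm (scaleC \<i> x - y))\<^sup>2) / 4)"
  by (rule complex_eqI) (simp_all add: norm_add_square norm_diff_square cinner_scaleC_left)

lemma continuous_on_cinner_right: "continuous_on UNIV (\<lambda>y. cinner (x::'a::complex_hilbert) y)"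
  unfolding cinner_polarization by (intro continuous_intros) auto

lemma continuous_on_cinner_left: "continuous_on UNIV (\<lambda>x. cinner (x::'a::complex_hilbert) y)"
  using continuous_on_cnj[OF continuous_on_cinner_right[of y]] by (subst cinner_cnj) simp

lemma csubspace_scaleR: "csubspace S \<Longrightarrow> x \<in> S \<Longrightarrow> scaleR r x \<in> S"
  by (simp add: csubspace_def scaleR_scaleC)

lemma orth_diff: "x \<in> orth S \<Longrightarrow> y \<in> orth S \<Longrightarrow> x - y \<in> orth (S::'a::complex_hilbert set)"
  by (simp add: orth_def cinner_diff_right)

lemma cinner_eq_zero_sym: "cinner x y = 0 \<Longrightarrow> cinner y (x::'a::complex_hilbert) = 0"
  using cinner_cnj[of y x] by simp

lemma subset_orth_orth: "S \<subseteq> orth (orth (S::'a::complex_hilbert set))"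
  unfolding orth_def using cinner_eq_zero_sym by blast

lemma in_orth_self_eq_zero: "x \<in> S \<Longrightarrow> x \<in> orth S \<Longrightarrow> x = (0::'a::complex_hilbert)"
  unfolding orth_def using cinner_self_eq_zero by blast

section \<open>Orthogonal projection onto closed subspaces\<close>

text \<open>The library's closest-point theorem needs a heine_borel space; in an arbitrary complex
Hilbert space the nearest point is the limit of a minimizing sequence, which the parallelogram
law makes Cauchy.\<close>

lemma linear_le_quadratic_imp_zero:
  fixes r N :: real
  assumes "N \<ge> 0" and "\<forall>s. 2 * s * r \<le> s\<^sup>2 * N"
  shows "r = 0"
proof -
  define K where "K = N + 1"
  have K: "K > 0" using assms(1) by (simp add: K_def)
  have "2 * (r / K) * r \<le> (r / K)\<^sup>2 * N" using assms(2) by blast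
  then have "K\<^sup>2 * (2 * (r / K) * r) \<le> K\<^sup>2 * ((r / K)\<^sup>2 * N)"
    by (rule mult_left_mono) simp
  also have "K\<^sup>2 * (2 * (r / K) * r) = 2 * r\<^sup>2 * K"
    using K by (simp add: power2_eq_square field_simps)
  also have "K\<^sup>2 * ((r / K)\<^sup>2 * N) = r\<^sup>2 * N"
    using K by (simp add: power2_eq_square field_simps)
  finally have "r\<^sup>2 * (N + 2) \<le> 0" by (simp add: K_def algebra_simps)
  then show ?thesis using assms(1) by (simp add: mult_le_0_iff)
qed

lemma csubspace_dist_square_le:
  fixes S :: "'a::complex_hilbert set"
  assumes S: "csubspace S" and "a \<in> S" "b \<in> S"
  shows "(dist a b)\<^sup>2 \<le> 2 * (dist p a)\<^sup>2 + 2 * (dist p b)\<^sup>2 - 4 * (infdist p S)\<^sup>2"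
proof -
  define c where "c = scaleR (1/2) (a + b)"
  have "c \<in> S" unfolding c_def using assms by (simp add: csubspace_scaleR csubspace_def)
  moreover have "(p - a) + (p - b) = scaleR 2 (p - c)"
    unfolding c_def by (simp add: algebra_simps scaleR_2)
  ultimately have "2 * infdist p S \<le> norm ((p - a) + (p - b))"
    using infdist_le[of c S p] by (simp add: dist_norm)
  then have "(2 * infdist p S)\<^sup>2 \<le> (norm ((p - a) + (p - b)))\<^sup>2"
    by (rule power_mono) (simp add: infdist_nonneg)
  moreover have "(norm ((p - a) - (p - b)))\<^sup>2 = (dist a b)\<^sup>2"
    by (simp add: dist_norm norm_minus_commute)
  ultimately show ?thesis
    using parallelogram_law[of "p - a" "p - b"] by (simp add: dist_norm power_mult_distrib)
qed

lemma closed_csubspace_nearest_point: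
  fixes S :: "'a::complex_hilbert set"
  assumes S: "csubspace S" and "closed S"
  obtains q where "q \<in> S" and "\<forall>h\<in>S. dist p q \<le> dist p h"
proof -
  define d where "d = infdist p S"
  have "S \<noteq> {}" using S by (auto simp: csubspace_def)
  then have "\<exists>g\<in>S. dist p g < d + inverse (Suc n)" for n
    unfolding d_def infdist_notempty[OF \<open>S \<noteq> {}\<close>]
    by (subst cINF_less_iff[symmetric]) (auto intro: bdd_belowI[where m = 0])
  then obtain g where gS: "\<And>n. g n \<in> S" and gd: "\<And>n. dist p (g n) < d + inverse (Suc n)"
    by metis
  define \<delta> where "\<delta> n = (d + inverse (Suc n))\<^sup>2 - d\<^sup>2" for n
  have "\<delta> \<longlonglongrightarrow> (d + 0)\<^sup>2 - d\<^sup>2"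
    unfolding \<delta>_def by (intro tendsto_intros LIMSEQ_inverse_real_of_nat)
  then have \<delta>: "\<delta> \<longlonglongrightarrow> 0" by simp
  have dist_g: "(dist (g m) (g n))\<^sup>2 \<le> 2 * \<delta> m + 2 * \<delta> n" for m n
  proof -
    have "(dist p (g k))\<^sup>2 \<le> d\<^sup>2 + \<delta> k" for k
      using power_mono[OF less_imp_le[OF gd[of k]], of 2] by (simp add: \<delta>_def)
    from this[of m] this[of n] show ?thesis
      using csubspace_dist_square_le[OF S gS gS, of m n p] unfolding d_def by linarith
  qed
  have "Cauchy g"
  proof (rule metric_CauchyI)
    fix e :: real assume "0 < e"
    then obtain N where N: "\<And>n. n \<ge> N \<Longrightarrow> \<bar>\<delta> n\<bar> < e\<^sup>2 / 4"
      using LIMSEQ_D[OF \<delta>, of "e\<^sup>2 / 4"] by auto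
    have "dist (g m) (g n) < e" if "m \<ge> N" "n \<ge> N" for m n
    proof -
      have "\<delta> m < e\<^sup>2 / 4" "\<delta> n < e\<^sup>2 / 4"
        using N[OF that(1)] N[OF that(2)] by (simp_all add: abs_less_iff)
      then have "(dist (g m) (g n))\<^sup>2 < e\<^sup>2" using dist_g[of m n] by linarith
      then show ?thesis using \<open>0 < e\<close> by (simp add: power_less_imp_less_base)
    qed
    then show "\<exists>N. \<forall>m\<ge>N. \<forall>n\<ge>N. dist (g m) (g n) < e" by blast
  qed
  then obtain q where gq: "g \<longlonglongrightarrow> q" unfolding Cauchy_convergent_iff convergent_def by blast
  have "dist p q \<le> d"
  proof (rule LIMSEQ_le)
    show "(\<lambda>n. dist p (g n)) \<longlonglongrightarrow> dist p q" by (intro tendsto_intros gq)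
    show "(\<lambda>n. d + inverse (Suc n)) \<longlonglongrightarrow> d"
      using tendsto_add[OF tendsto_const LIMSEQ_inverse_real_of_nat] by simp
    show "\<exists>N. \<forall>n\<ge>N. dist p (g n) \<le> d + inverse (Suc n)"
      using gd by (auto intro: less_imp_le)
  qed
  show ?thesis
  proof (rule that)
    show "q \<in> S" using closed_sequentially[OF \<open>closed S\<close> gS gq] .
    show "\<forall>h\<in>S. dist p q \<le> dist p h"
      using \<open>dist p q \<le> d\<close> infdist_le[of _ S p] unfolding d_def by (meson order.trans)
  qed
qed

lemma nearest_point_orth:
  fixes S :: "'a::complex_hilbert set"
  assumes S: "csubspace S" and "q \<in> S" and nearest: "\<forall>h\<in>S. dist p q \<le> dist p h"
  shows "p - q \<in> orth S"
proof -
  define e where "e = p - q"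
  have Re_zero: "Re (cinner e h) = 0" if "h \<in> S" for h
  proof (rule linear_le_quadratic_imp_zero)
    show "\<forall>s. 2 * s * Re (cinner e h) \<le> s\<^sup>2 * (norm h)\<^sup>2"
    proof
      fix s :: real
      have "q + scaleR s h \<in> S"
        using S \<open>q \<in> S\<close> that by (simp add: csubspace_scaleR csubspace_def)
      then have "norm e \<le> norm (e - scaleR s h)"
        using nearest by (force simp: e_def dist_norm diff_diff_eq)
      then have "(norm e)\<^sup>2 \<le> (norm (e - scaleR s h))\<^sup>2" by (simp add: power_mono)
      moreover have "cinner e (scaleR s h) = complex_of_real s * cinner e h"
        by (simp add: scaleR_scaleC cinner_scaleC_right)
      ultimately show "2 * s * Re (cinner e h) \<le> s\<^sup>2 * (norm h)\<^sup>2"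
        by (simp add: norm_diff_square power_mult_distrib)
    qed
  qed simp
  have "cinner h e = 0" if "h \<in> S" for h
  proof -
    have "Re (cinner e (scaleC (- \<i>) h)) = 0"
      using Re_zero S that by (simp add: csubspace_def)
    then have "cinner e h = 0"
      using Re_zero[OF that] by (simp add: cinner_scaleC_right complex_eq_iff)
    then show ?thesis by (rule cinner_eq_zero_sym)
  qed
  then show ?thesis unfolding e_def orth_def by blast
qed

lemma closed_csubspace_orth_decomp:
  fixes S :: "'a::complex_hilbert set"
  assumes "csubspace S" and "closed S"
  obtains q where "q \<in> S" and "p - q \<in> orth S"
  using closed_csubspace_nearest_point[OF assms] nearest_point_orth[OF assms(1)] by metis

lemma orth_orth_subset:
  fixes S :: "'a::complex_hilbert set"
  assumes "csubspace S" and "closed S"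
  shows "orth (orth S) \<subseteq> S"
proof
  fix v assume v: "v \<in> orth (orth S)"
  obtain q where q: "q \<in> S" "v - q \<in> orth S"
    using closed_csubspace_orth_decomp[OF assms] by blast
  have "v - q \<in> orth (orth S)" using orth_diff v q(1) subset_orth_orth by blast
  then have "v - q = 0" using q(2) in_orth_self_eq_zero by blast
  then show "v \<in> S" using q(1) by simp
qed

section \<open>Operators, adjoints, ranges and kernels\<close>

instantiation prod :: (complex_hilbert, complex_hilbert) complex_hilbert
begin

definition scaleC_prod_def: "scaleC a p = (scaleC a (fst p), scaleC a (snd p))"

definition cinner_prod_def: "cinner p q = cinner (fst p) (fst q) + cinner (snd p) (snd q)"

instance
proof
  fix a b :: complex and x y z :: "'a \<times> 'b" and r :: real
  show "scaleC a (x + y) = scaleC a x + scaleC a y"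
    by (simp add: scaleC_prod_def scaleC_add_right)
  show "scaleC (a + b) x = scaleC a x + scaleC b x"
    by (simp add: scaleC_prod_def scaleC_add_left)
  show "scaleC a (scaleC b x) = scaleC (a * b) x"
    by (simp add: scaleC_prod_def scaleC_scaleC)
  show "scaleC 1 x = x"
    by (simp add: scaleC_prod_def scaleC_one)
  show "scaleR r x = scaleC (complex_of_real r) x"
    by (simp add: scaleC_prod_def scaleR_scaleC prod_eq_iff)
  show "cinner x y = cnj (cinner y x)"
    by (simp add: cinner_prod_def cinner_cnj[of "fst x"] cinner_cnj[of "snd x"])
  show "cinner (x + y) z = cinner x z + cinner y z"
    by (simp add: cinner_prod_def cinner_add_left)
  show "cinner (scaleC a x) y = cnj a * cinner x y"
    by (simp add: cinner_prod_def scaleC_prod_def cinner_scaleC_left distrib_left)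
  show "cinner x x = complex_of_real ((norm x)\<^sup>2)"
    by (simp add: cinner_prod_def norm_prod_def cinner_self_norm)
qed

end

lemma dom_comp_op [simp]: "dom (comp_op A B) = {x \<in> dom B. app B x \<in> dom A}"
  by (simp add: comp_op_def dom_def)

lemma app_comp_op [simp]: "app (comp_op A B) x = app A (app B x)"
  by (simp add: comp_op_def app_def)

lemma linear_op_zero:
  assumes "linear_op T" shows "0 \<in> dom T" and "app T 0 = 0"
proof -
  show "0 \<in> dom T" using assms by (simp add: linear_op_def csubspace_def)
  then have "app T (scaleC 0 0) = scaleC 0 (app T 0)"
    using assms unfolding linear_op_def by blast
  then show "app T 0 = 0" by simp
qed

lemma linear_op_diff:
  assumes "linear_op T" and "x \<in> dom T" and "y \<in> dom T"
  shows "x - y \<in> dom T" and "app T (x - y) = app T x - app T y"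
proof -
  have "scaleC (-1) y \<in> dom T" using assms by (simp add: linear_op_def csubspace_def)
  then have "x + scaleC (-1) y \<in> dom T"
    and "app T (x + scaleC (-1) y) = app T x + scaleC (-1) (app T y)"
    using assms by (simp_all add: linear_op_def csubspace_def)
  then show "x - y \<in> dom T" and "app T (x - y) = app T x - app T y"
    by (simp_all add: scaleC_minus_one)
qed

lemma linear_op_comp_op:
  assumes "linear_op A" and "linear_op B"
  shows "linear_op (comp_op A B)"
  using assms linear_op_zero[OF assms(2)]
  unfolding linear_op_def csubspace_def by auto

lemma csubspace_ran:
  assumes T: "linear_op T" shows "csubspace (ran T)"
proof -
  have "app T x + app T y \<in> ran T" if "x \<in> dom T" "y \<in> dom T" for x y
  proof -
    have "x + y \<in> dom T" "app T x + app T y = app T (x + y)"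
      using T that by (simp_all add: linear_op_def csubspace_def)
    then show ?thesis unfolding ran_def by blast
  qed
  moreover have "scaleC a (app T x) \<in> ran T" if "x \<in> dom T" for a x
  proof -
    have "scaleC a x \<in> dom T" "scaleC a (app T x) = app T (scaleC a x)"
      using T that by (simp_all add: linear_op_def csubspace_def)
    then show ?thesis unfolding ran_def by blast
  qed
  moreover have "0 \<in> ran T" using linear_op_zero[OF T] unfolding ran_def by force
  ultimately show ?thesis unfolding csubspace_def by (auto simp: ran_def)
qed

lemma csubspace_ker:
  assumes "linear_op T" shows "csubspace (ker T)"
  using assms linear_op_zero[OF assms]
  unfolding linear_op_def csubspace_def ker_def by auto

lemma csubspace_graph:
  assumes "linear_op T" shows "csubspace (graph T)"
  using assms linear_op_zero[OF assms]
  unfolding linear_op_def csubspace_def graph_def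
  by (auto simp: zero_prod_def scaleC_prod_def)

lemma closed_ker:
  assumes "closed_op T" shows "closed (ker T)"
proof -
  have "ker T = (\<lambda>x. (x, 0)) -` graph T" by (auto simp: ker_def graph_def)
  moreover have "closed (graph T)" using assms by (simp add: closed_op_def)
  ultimately show ?thesis by (simp add: continuous_closed_vimage)
qed

lemma densely_defined_cinner_eqD:
  fixes T :: "'a::complex_hilbert lop"
  assumes "densely_defined T" and "\<forall>x\<in>dom T. cinner x z1 = cinner x z2"
  shows "z1 = z2"
proof -
  have "closed {x. cinner x (z1 - z2) = 0}"
    by (rule closed_Collect_eq[OF continuous_on_cinner_left continuous_on_const])
  moreover have "dom T \<subseteq> {x. cinner x (z1 - z2) = 0}"
    using assms(2) by (auto simp: cinner_diff_right)
  ultimately have "closure (dom T) \<subseteq> {x. cinner x (z1 - z2) = 0}"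
    by (rule closure_minimal[rotated])
  then have "cinner (z1 - z2) (z1 - z2) = 0"
    using assms(1) unfolding densely_defined_def by blast
  then show ?thesis by (simp add: cinner_self_eq_zero)
qed

lemma adjI:
  fixes T :: "'a::complex_hilbert lop"
  assumes T: "densely_defined T" and yz: "\<forall>x\<in>dom T. cinner (app T x) y = cinner x z"
  shows "y \<in> dom (adj T)" and "app (adj T) y = z"
proof -
  show "y \<in> dom (adj T)" using yz unfolding adj_def dom_def by auto
  have "(THE z. \<forall>x\<in>dom T. cinner (app T x) y = cinner x z) = z"
    using yz densely_defined_cinner_eqD[OF T] by (intro the_equality) auto
  then show "app (adj T) y = z" unfolding adj_def app_def by simp
qed

lemma cinner_adj:
  fixes T :: "'a::complex_hilbert lop"
  assumes T: "densely_defined T" and "y \<in> dom (adj T)" and "x \<in> dom T"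
  shows "cinner (app T x) y = cinner x (app (adj T) y)"
proof -
  obtain z where z: "\<forall>x\<in>dom T. cinner (app T x) y = cinner x z"
    using assms(2) unfolding adj_def dom_def by auto
  then show ?thesis using adjI(2)[OF T z] assms(3) by simp
qed

lemma linear_op_adj:
  fixes T :: "'a::complex_hilbert lop"
  assumes T: "densely_defined T"
  shows "linear_op (adj T)"
proof -
  have add: "y1 + y2 \<in> dom (adj T) \<and> app (adj T) (y1 + y2) = app (adj T) y1 + app (adj T) y2"
    if "y1 \<in> dom (adj T)" "y2 \<in> dom (adj T)" for y1 y2
  proof -
    have "\<forall>x\<in>dom T. cinner (app T x) (y1 + y2) = cinner x (app (adj T) y1 + app (adj T) y2)"
      using that by (simp add: cinner_add_right cinner_adj[OF T])
    from adjI[OF T this] show ?thesis by blast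
  qed
  have scale: "scaleC a y \<in> dom (adj T) \<and> app (adj T) (scaleC a y) = scaleC a (app (adj T) y)"
    if "y \<in> dom (adj T)" for a y
  proof -
    have "\<forall>x\<in>dom T. cinner (app T x) (scaleC a y) = cinner x (scaleC a (app (adj T) y))"
      using that by (simp add: cinner_scaleC_right cinner_adj[OF T])
    from adjI[OF T this] show ?thesis by blast
  qed
  have "0 \<in> dom (adj T)" using adjI(1)[OF T, of 0 0] by simp
  with add scale show ?thesis unfolding linear_op_def csubspace_def by blast
qed

lemma orth_ran_subset_ker_adj:
  fixes T :: "'a::complex_hilbert lop"
  assumes T: "densely_defined T"
  shows "orth (ran T) \<subseteq> ker (adj T)"
proof
  fix y assume "y \<in> orth (ran T)"
  then have "\<forall>x\<in>dom T. cinner (app T x) y = cinner x 0" by (simp add: orth_def ran_def)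
  then have "y \<in> dom (adj T)" and "app (adj T) y = 0" by (rule adjI[OF T])+
  then show "y \<in> ker (adj T)" by (simp add: ker_def)
qed

lemma ker_subset_orth_ran_adj:
  fixes T :: "'a::complex_hilbert lop"
  assumes T: "densely_defined T"
  shows "ker T \<subseteq> orth (ran (adj T))"
proof (clarsimp simp: orth_def ran_def)
  fix k v assume "k \<in> ker T" and v: "v \<in> dom (adj T)"
  then have "cinner k (app (adj T) v) = 0" using cinner_adj[OF T v, of k] by (simp add: ker_def)
  then show "cinner (app (adj T) v) k = 0" by (rule cinner_eq_zero_sym)
qed

text \<open>The graph of a closed T is a closed subspace of H \<times> H, hence its own double
orthogonal complement; for y \<perp> R(T*) the pair (y, 0) is orthogonal to every (a, b) \<perp> G(T),
because such b lies in D(T*) with T* b = -a.\<close>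

lemma orth_ran_adj_subset_ker:
  fixes T :: "'a::complex_hilbert lop"
  assumes T: "densely_defined T" and closed: "closed_op T"
  shows "orth (ran (adj T)) \<subseteq> ker T"
proof
  fix y assume y: "y \<in> orth (ran (adj T))"
  have "(y, 0) \<in> orth (orth (graph T))"
    unfolding orth_def
  proof (safe)
    fix a b assume ab: "\<forall>g\<in>graph T. cinner g (a, b) = 0"
    have "\<forall>x\<in>dom T. cinner (app T x) b = cinner x (- a)"
    proof
      fix x assume "x \<in> dom T"
      then have "cinner x a + cinner (app T x) b = 0"
        using ab by (auto simp: graph_def cinner_prod_def)
      then show "cinner (app T x) b = cinner x (- a)"
        by (simp add: cinner_minus_right eq_neg_iff_add_eq_0 add.commute)
    qed
    then have b: "b \<in> dom (adj T)" "app (adj T) b = - a" by (rule adjI[OF T])+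
    then have "cinner (app (adj T) b) y = 0" using y unfolding orth_def ran_def by blast
    then show "cinner (a, b) (y, 0) = 0" using b(2) by (simp add: cinner_prod_def cinner_minus_left)
  qed
  moreover have "csubspace (graph T)" and "closed (graph T)"
    using closed csubspace_graph unfolding closed_op_def by blast+
  ultimately have "(y, 0) \<in> graph T" using orth_orth_subset by blast
  then show "y \<in> ker T" by (auto simp: graph_def ker_def)
qed

lemma ker_adj_comp_op:
  fixes T :: "'a::complex_hilbert lop"
  assumes T: "densely_defined T"
  shows "ker (comp_op (adj T) T) = ker T"
proof
  show "ker (comp_op (adj T) T) \<subseteq> ker T"
  proof
    fix x assume "x \<in> ker (comp_op (adj T) T)"
    then have x: "x \<in> dom T" "app T x \<in> dom (adj T)" "app (adj T) (app T x) = 0"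
      by (auto simp: ker_def)
    then have "cinner (app T x) (app T x) = 0" using cinner_adj[OF T x(2,1)] by simp
    then show "x \<in> ker T" using x(1) by (simp add: ker_def cinner_self_eq_zero)
  qed
  have "0 \<in> ker (adj T)" using orth_ran_subset_ker_adj[OF T] by (auto simp: orth_def)
  then show "ker T \<subseteq> ker (comp_op (adj T) T)" by (auto simp: ker_def)
qed

text \<open>Split v \<in> D(T*) along the closed range R(T): the component orthogonal to R(T) lies
in N(T*), so T* v = T* T w for some w.\<close>

lemma ran_adj_comp_op:
  fixes T :: "'a::complex_hilbert lop"
  assumes T: "densely_defined T" and "linear_op T" and "closed (ran T)"
  shows "ran (comp_op (adj T) T) = ran (adj T)"
proof
  show "ran (comp_op (adj T) T) \<subseteq> ran (adj T)" by (auto simp: ran_def)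
  show "ran (adj T) \<subseteq> ran (comp_op (adj T) T)"
  proof
    fix m assume "m \<in> ran (adj T)"
    then obtain v where v: "v \<in> dom (adj T)" "m = app (adj T) v" by (auto simp: ran_def)
    obtain v1 where v1: "v1 \<in> ran T" "v - v1 \<in> orth (ran T)"
      using closed_csubspace_orth_decomp[OF csubspace_ran \<open>closed (ran T)\<close>] assms(2) by blast
    then have "v - v1 \<in> ker (adj T)" using orth_ran_subset_ker_adj[OF T] by blast
    then have k: "v - v1 \<in> dom (adj T)" "app (adj T) (v - v1) = 0" by (simp_all add: ker_def)
    have "v1 \<in> dom (adj T)" "app (adj T) v1 = m"
      using linear_op_diff[OF linear_op_adj[OF T] v(1) k(1)] k(2) v(2) by simp_all
    moreover obtain w where "w \<in> dom T" "v1 = app T w" using v1(1) by (auto simp: ran_def)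
    ultimately show "m \<in> ran (comp_op (adj T) T)" by (auto simp: ran_def)
  qed
qed

lemma EP_ker_eq_orth_ran:
  fixes T :: "'a::complex_hilbert lop"
  assumes "densely_defined T" and "closed_op T" and "EP T"
  shows "ker T = orth (ran T)"
  using ker_subset_orth_ran_adj[OF assms(1)] orth_ran_adj_subset_ker[OF assms(1,2)] assms(3)
  by (simp add: EP_def)

lemma EP_adj_comp_op:
  fixes T :: "'a::complex_hilbert lop"
  assumes T: "densely_defined T" and closed: "closed_op T" and "EP T"
  shows "linear_op (comp_op (adj T) T)"
    and "ran (comp_op (adj T) T) = ran T"
    and "ker (comp_op (adj T) T) = orth (ran T)"
    and "closed (ran (comp_op (adj T) T))"
    and "closed (ker (comp_op (adj T) T))"
proof -
  have lin: "linear_op T" using closed by (simp add: closed_op_def)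
  then show "linear_op (comp_op (adj T) T)" using linear_op_comp_op linear_op_adj[OF T] by blast
  have "closed (ran T)" and "ran T = ran (adj T)" using \<open>EP T\<close> unfolding EP_def by blast+
  then show ran: "ran (comp_op (adj T) T) = ran T" using ran_adj_comp_op[OF T lin] by simp
  show ker: "ker (comp_op (adj T) T) = orth (ran T)"
    using ker_adj_comp_op[OF T] EP_ker_eq_orth_ran[OF assms] by simp
  show "closed (ran (comp_op (adj T) T))" using ran \<open>closed (ran T)\<close> by simp
  show "closed (ker (comp_op (adj T) T))"
    using ker_adj_comp_op[OF T] closed_ker[OF closed] by simp
qed

section \<open>The Moore--Penrose inverse\<close>

lemma app_mp_inv: "app (mp_inv A) p = (THE x. x \<in> carrier_op A \<and> p - app A x \<in> orth (ran A))"
  by (simp add: mp_inv_def app_def)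

lemma mp_inv_eqI:
  fixes A :: "'a::complex_hilbert lop"
  assumes A: "linear_op A" and w: "w \<in> carrier_op A" "p - app A w \<in> orth (ran A)"
  shows "app (mp_inv A) p = w"
  unfolding app_mp_inv
proof (rule the_equality)
  show "w \<in> carrier_op A \<and> p - app A w \<in> orth (ran A)" using w by blast
  fix w' assume w': "w' \<in> carrier_op A \<and> p - app A w' \<in> orth (ran A)"
  have d: "w' - w \<in> dom A" "app A (w' - w) = app A w' - app A w"
    using linear_op_diff[OF A] w w' by (auto simp: carrier_op_def)
  have "(p - app A w) - (p - app A w') \<in> orth (ran A)" using orth_diff w w' by blast
  then have "app A (w' - w) \<in> orth (ran A)" using d(2) by simp
  moreover have "app A (w' - w) \<in> ran A" using d(1) by (auto simp: ran_def)
  ultimately have "w' - w \<in> ker A" using d(1) in_orth_self_eq_zero by (auto simp: ker_def)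
  moreover have "w' - w \<in> orth (ker A)" using orth_diff w w' unfolding carrier_op_def by blast
  ultimately show "w' = w" using in_orth_self_eq_zero by fastforce
qed

lemma mp_inv_app:
  fixes A :: "'a::complex_hilbert lop"
  assumes A: "linear_op A" and "closed (ran A)" and "closed (ker A)"
  shows "app (mp_inv A) p \<in> carrier_op A" and "p - app A (app (mp_inv A) p) \<in> orth (ran A)"
proof -
  obtain m where m: "m \<in> ran A" "p - m \<in> orth (ran A)"
    using closed_csubspace_orth_decomp[OF csubspace_ran[OF A] \<open>closed (ran A)\<close>] by blast
  then obtain v where v: "v \<in> dom A" "m = app A v" by (auto simp: ran_def)
  obtain v0 where v0: "v0 \<in> ker A" "v - v0 \<in> orth (ker A)"
    using closed_csubspace_orth_decomp[OF csubspace_ker[OF A] \<open>closed (ker A)\<close>] by blast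
  then have "v - v0 \<in> carrier_op A" "app A (v - v0) = m"
    using linear_op_diff[OF A v(1)] v(2) by (auto simp: ker_def carrier_op_def)
  moreover from this have "app (mp_inv A) p = v - v0" using mp_inv_eqI[OF A] m(2) by simp
  ultimately show "app (mp_inv A) p \<in> carrier_op A"
    and "p - app A (app (mp_inv A) p) \<in> orth (ran A)" using m(2) by simp_all
qed

lemma dom_mp_inv:
  fixes A :: "'a::complex_hilbert lop"
  assumes A: "linear_op A" and "closed (ran A)"
  shows "dom (mp_inv A) = UNIV"
proof -
  have "p \<in> dom (mp_inv A)" for p
  proof -
    obtain m where "m \<in> ran A" "p - m \<in> orth (ran A)"
      using closed_csubspace_orth_decomp[OF csubspace_ran[OF A] \<open>closed (ran A)\<close>] by blast
    then show ?thesis unfolding mp_inv_def dom_def by force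
  qed
  then show ?thesis by blast
qed

lemma op_eq_comp_op_commute:
  assumes "op_eq (comp_op T A) (comp_op A T)" and "w \<in> dom A" and "app A w \<in> dom T"
  shows "app T w \<in> dom A" and "app A (app T w) = app T (app A w)"
proof -
  have "w \<in> dom (comp_op T A)" using assms(2,3) by simp
  then show "app T w \<in> dom A" and "app A (app T w) = app T (app A w)"
    using assms(1) unfolding op_eq_def by auto
qed

theorem lemma2p16:
  fixes T :: "'a::complex_hilbert lop"
  assumes "densely_defined T" and "closed_op T"
    and "quasinormal T" and "EP T"
  shows "op_le (comp_op (mp_inv (comp_op (adj T) T)) T)
               (comp_op T (mp_inv (comp_op (adj T) T)))"
proof -
  define A where "A = comp_op (adj T) T"
  have lin: "linear_op T" using assms(2) by (simp add: closed_op_def)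
  note kerT = EP_ker_eq_orth_ran[OF assms(1,2,4)]
  note A = EP_adj_comp_op[OF assms(1,2,4), folded A_def]
  have qn: "op_eq (comp_op T A) (comp_op A T)" using assms(3) by (simp add: quasinormal_def A_def)
  have "app (mp_inv A) x \<in> dom T \<and> app T (app (mp_inv A) x) = app (mp_inv A) (app T x)"
    if x: "x \<in> dom T" for x
  proof -
    define w where "w = app (mp_inv A) x"
    have w: "w \<in> dom A" "w \<in> orth (ker A)" "x - app A w \<in> ker T"
      using mp_inv_app[OF A(1,4,5), of x] A(2) kerT by (simp_all add: w_def carrier_op_def)
    then have "app A w \<in> dom T" "app T (app A w) = app T x"
      using linear_op_diff[OF lin x, of "x - app A w"] by (auto simp: ker_def)
    then have "app T w \<in> dom A" "app A (app T w) = app T x"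
      using op_eq_comp_op_commute[OF qn w(1)] by simp_all
    moreover have "w \<in> dom T" using w(1) by (simp add: A_def)
    moreover from this have "app T w \<in> orth (ker A)"
      using A(3) subset_orth_orth[of "ran T"] by (auto simp: ran_def)
    ultimately have "app (mp_inv A) (app T x) = app T w"
      by (intro mp_inv_eqI[OF A(1)]) (simp_all add: carrier_op_def orth_def)
    with \<open>w \<in> dom T\<close> show ?thesis by (simp add: w_def)
  qed
  then show ?thesis
    unfolding A_def[symmetric] op_le_def using dom_mp_inv[OF A(1,4)] by auto
qed

end
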